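(* Let $X$, $Y$, $Y'$ be nonempty sets, let $F\colon X^*\to Y$ be a preassociative standard function and let $g\colon Y\to Y'$ be a function such that $g|_{\mathrm{ran}(F^{\flat})}$ is one-to-one. Let $\mathbf{a}\in Y'\setminus\mathrm{ran}(g|_{\mathrm{ran}(F^{\flat})})$ and define $H\colon X^*\to Y'$ by $H(\varepsilon)=\mathbf{a}$ and $H^{\flat}=g\circ F^{\flat}$. Then $H$ is standard and preassociative.
   Context: For a nonempty set $X$, $X^*=\bigcup_{n\geqslant 0}X^n$ is the set of all finite tuples over $X$, with $X^0=\{\varepsilon\}$, $\varepsilon$ the empty tuple. For tuples $\mathbf{x},\mathbf{y}$, $F(\mathbf{x},\mathbf{y})$ denotes $F$ applied to the concatenation (concatenation with $\varepsilon$ leaves a tuple unchanged). For $F\colon X^*\to Y$, $F^{\flat}=F|_{X^*\setminus\{\varepsilon\}}$. $F$ is standard if $F(\mathbf{x})=F(\varepsilon)$ holds only if $\mathbf{x}=\varepsilon$. $F$ is preassociative if for all $\mathbf{x},\mathbf{y},\mathbf{y}',\mathbf{z}\in X^*$, $F(\mathbf{y})=F(\mathbf{y}')$ implies $F(\mathbf{x},\mathbf{y},\mathbf{z})=F(\mathbf{x},\mathbf{y}',\mathbf{z})$. *)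

theory Defs
  imports Main
begin

text \<open>Tuples over X are modelled as lists; the empty tuple is the empty list and
  F(x,y) on tuples is F applied to the concatenation x @ y.\<close>

definition standard :: "('x list \<Rightarrow> 'y) \<Rightarrow> bool" where
  "standard F \<longleftrightarrow> (\<forall>xs. F xs = F [] \<longrightarrow> xs = [])"

definition preassociative :: "('x list \<Rightarrow> 'y) \<Rightarrow> bool" where
  "preassociative F \<longleftrightarrow>
     (\<forall>xs ys ys' zs. F ys = F ys' \<longrightarrow> F (xs @ ys @ zs) = F (xs @ ys' @ zs))"

definition ran_flat :: "('x list \<Rightarrow> 'y) \<Rightarrow> 'y set" where
  "ran_flat F = F ` {xs. xs \<noteq> []}"

end

theory Submission
  imports Defs
begin

text \<open>H separates the empty tuple from all others, since a lies outside the range of g on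
  the nonempty tuples, and on nonempty tuples equality of H-values pulls back to equality of
  F-values by injectivity of g. Hence H ys = H ys' forces either ys = ys' = [] or
  F ys = F ys', and in both cases preassociativity of F transfers to H because inserting a
  nonempty tuple into a context yields a nonempty tuple.\<close>

lemma preassociative_if_kernel_refines:
  assumes "preassociative F"
    and "\<And>ys ys'. H ys = H ys' \<Longrightarrow> ys = ys' \<or> F ys = F ys'"
    and "\<And>xs. xs \<noteq> [] \<Longrightarrow> H xs = g (F xs)"
    and "standard H"
  shows "preassociative H"
  unfolding preassociative_def
proof (intro allI impI)
  fix xs ys ys' zs
  assume "H ys = H ys'"
  then consider "ys = ys'" | "ys \<noteq> []" "ys' \<noteq> []" "F ys = F ys'"
    using assms(2,4) unfolding standard_def by metis
  then show "H (xs @ ys @ zs) = H (xs @ ys' @ zs)"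
  proof cases
    case 2
    then have "F (xs @ ys @ zs) = F (xs @ ys' @ zs)"
      using assms(1) unfolding preassociative_def by blast
    with 2 show ?thesis by (simp add: assms(3))
  qed simp
qed

theorem proposition3p5:
  fixes F :: "'x list \<Rightarrow> 'y" and g :: "'y \<Rightarrow> 'z" and a :: 'z and H :: "'x list \<Rightarrow> 'z"
  assumes "preassociative F" and "standard F"
    and "inj_on g (ran_flat F)"
    and "a \<notin> g ` ran_flat F"
    and "H [] = a"
    and "\<And>xs. xs \<noteq> [] \<Longrightarrow> H xs = g (F xs)"
  shows "standard H \<and> preassociative H"
proof
  have in_ran: "xs \<noteq> [] \<Longrightarrow> F xs \<in> ran_flat F" for xs :: "'x list"
    by (simp add: ran_flat_def)
  show standard_H: "standard H"
    unfolding standard_def using assms(4-6) in_ran by (metis image_eqI)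
  have kernel: "ys = ys' \<or> F ys = F ys'" if "H ys = H ys'" for ys ys'
  proof (cases "ys = [] \<or> ys' = []")
    case True
    with that standard_H show ?thesis unfolding standard_def by metis
  next
    case False
    with that assms(6) have "g (F ys) = g (F ys')" by simp
    with False assms(3) in_ran show ?thesis by (meson inj_on_def)
  qed
  show "preassociative H"
    by (rule preassociative_if_kernel_refines[where F = F and H = H and g = g])
      (fact assms(1) kernel assms(6) standard_H)+
qed

end
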